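(* Let $\mathcal{M}$ be a set of mappings over a schema $\Sigma$, $\mathcal{D}$ a database instance of $\Sigma$, and $q(\vec x)\leftarrow L_1(\vec v_1),\dots,L_n(\vec v_n)$ a conjunctive query such that $\vec x=\bigcup_{i=1}^n\vec v_i$ (as sets of variables). Then $$|\mathrm{unf}(q(\vec x),\mathcal{M})^{\mathcal{D}}|=\sum_{q_u\in\mathrm{unf}(q,\mathrm{wrap}(\mathcal{M}))}|q_u(\vec x)^{\mathcal{D}}|,$$ where the sum ranges over the conjunctive queries (rules) $q_u$ of the unfolding of $q$ with respect to $\mathrm{wrap}(\mathcal{M})$.
   Context: A mapping is $L(\vec f(\vec x))\leftsquigarrow V(\vec x)$ with $L$ a concept or role name, $\vec f(\vec x)$ a tuple of terms each of the form $g(\vec y)$ ($g$ a function symbol, $\vec y\subseteq\vec x$), and $V$ a view name with extension $V^{\mathcal{D}}$ given by a query over $\Sigma$. Signature: $\mathrm{sign}(m)=(L,\vec f)$. Unfolding of a CQ $q(\vec x)\leftarrow L_1(\vec v_1),\dots,L_n(\vec v_n)$: the non-recursive Datalog query $(q_{\mathrm{unf}}(\vec x),\Pi)$ where $\Pi$ is a minimal (up to renaming) set of rules containing, for every tuple $(m_1,\dots,m_n)$ of mappings with $m_i=L_i(\vec f_i(\vec x_i))\leftsquigarrow V_i(\vec z_i)$ and every mgu $\sigma$ of $\{(L_i(\vec v_i),L_i(\vec f_i(\vec x_i)))\}$, the rule $q_{\mathrm{unf}}(\sigma(\vec x))\leftarrow V_1(\sigma(\vec z_1)),\dots,V_n(\sigma(\vec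 z_n))$; answers are (sets of) tuples of terms $f(\vec a)$. Wrap: for each signature $(L,\vec f)$, if the mappings of that signature are $\{L(\vec f(\vec v_i))\leftsquigarrow V_i(\vec v_i)\mid 1\le i\le k\}$, they are replaced by the single mapping $L(\vec f(\vec v))\leftsquigarrow W(\vec v)$ with fresh variables $\vec v$ and $W$ a fresh view for the Datalog query $(W(\vec v),\{W(\vec v_i)\leftarrow V_i(\vec v_i)\}_i)$ (so $W^{\mathcal{D}}=\bigcup_iV_i^{\mathcal{D}}$); $\mathrm{wrap}(\mathcal{M})$ is the union of these over all signatures. *)

theory Defs
  imports Main
begin

text \<open>First-order terms over function symbols 'f, constants 'c (database values) and
variables 'x.  Ground answer terms have the form Fn f [Cst a1, ..., Cst ak].\<close>

datatype ('f, 'c, 'x) tm = Var 'x | Cst 'c | Fn 'f "('f, 'c, 'x) tm list"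

fun subst :: "('x \<Rightarrow> ('f, 'c, 'y) tm) \<Rightarrow> ('f, 'c, 'x) tm \<Rightarrow> ('f, 'c, 'y) tm" where
  "subst \<sigma> (Var x) = \<sigma> x"
| "subst \<sigma> (Cst c) = Cst c"
| "subst \<sigma> (Fn f ts) = Fn f (map (subst \<sigma>) ts)"

text \<open>A mapping  L(g1(y1),...,gk(yk)) ~> V(x)  with concept/role name L, head terms gi(yi)
(function symbol and list of mapping variables) and view atom V(x).  Mapping variables are
natural numbers.\<close>

datatype ('l, 'f, 'vn) mapping =
  Mapping (m_pred: 'l) (m_head: "('f \<times> nat list) list") (m_view: 'vn) (m_vars: "nat list")

definition sign :: "('l, 'f, 'vn) mapping \<Rightarrow> 'l \<times> 'f list" where
  "sign m = (m_pred m, map fst (m_head m))"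

text \<open>Shape required for wrap to be defined: the mapping is  L(f(v)) ~> V(v)  where
v is the concatenation of the (pairwise distinct) argument variables of the head terms,
and function symbols are used with their fixed arity ar.\<close>

definition normal_mappings :: "('f \<Rightarrow> nat) \<Rightarrow> ('l, 'f, 'vn) mapping set \<Rightarrow> bool" where
  "normal_mappings ar M \<longleftrightarrow>
     (\<forall>m\<in>M. m_vars m = concat (map snd (m_head m)) \<and> distinct (m_vars m) \<and>
             (\<forall>(f, ys)\<in>set (m_head m). length ys = ar f))"

text \<open>Variables of the unfolding: query variables (Inl) and mapping variables renamed apart
per body atom i (Inr (i, y)).\<close>

type_synonym ('f, 'c, 'v) utm = "('f, 'c, 'v + nat \<times> nat) tm"

type_synonym ('f, 'c, 'v, 'vn) rule = "('f, 'c, 'v) utm list \<times> ('vn \<times> ('f, 'c, 'v) utm list) list"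

definition head_term :: "nat \<Rightarrow> 'f \<times> nat list \<Rightarrow> ('f, 'c, 'v) utm" where
  "head_term i fy = Fn (fst fy) (map (\<lambda>y. Var (Inr (i, y))) (snd fy))"

definition unifier ::
  "('l \<times> 'v list) list \<Rightarrow> ('l, 'f, 'vn) mapping list \<Rightarrow> ('v + nat \<times> nat \<Rightarrow> ('f, 'c, 'v) utm) \<Rightarrow> bool" where
  "unifier atoms ms \<sigma> \<longleftrightarrow> length ms = length atoms \<and>
     (\<forall>i<length atoms. fst (atoms ! i) = m_pred (ms ! i) \<and>
        length (snd (atoms ! i)) = length (m_head (ms ! i)) \<and>
        (\<forall>k<length (snd (atoms ! i)).
           \<sigma> (Inl (snd (atoms ! i) ! k)) = subst \<sigma> (head_term i (m_head (ms ! i) ! k))))"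

definition mgu ::
  "('l \<times> 'v list) list \<Rightarrow> ('l, 'f, 'vn) mapping list \<Rightarrow> ('v + nat \<times> nat \<Rightarrow> ('f, 'c, 'v) utm) \<Rightarrow> bool" where
  "mgu atoms ms \<sigma> \<longleftrightarrow> unifier atoms ms \<sigma> \<and>
     (\<forall>\<tau>. unifier atoms ms \<tau> \<longrightarrow> (\<exists>\<theta>. \<forall>x. \<tau> x = subst \<theta> (\<sigma> x)))"

definition unf_rule ::
  "'v list \<Rightarrow> ('l, 'f, 'vn) mapping list \<Rightarrow> ('v + nat \<times> nat \<Rightarrow> ('f, 'c, 'v) utm) \<Rightarrow> ('f, 'c, 'v, 'vn) rule" where
  "unf_rule xs ms \<sigma> =
     (map (\<lambda>x. \<sigma> (Inl x)) xs,
      map (\<lambda>i. (m_view (ms ! i), map (\<lambda>z. \<sigma> (Inr (i, z))) (m_vars (ms ! i)))) [0..<length ms])"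

definition unf_rules ::
  "'v list \<Rightarrow> ('l \<times> 'v list) list \<Rightarrow> ('l, 'f, 'vn) mapping set \<Rightarrow> ('f, 'c, 'v, 'vn) rule set" where
  "unf_rules xs atoms M = {unf_rule xs ms \<sigma> | ms \<sigma>. set ms \<subseteq> M \<and> mgu atoms ms \<sigma>}"

definition rename_rule ::
  "('v + nat \<times> nat \<Rightarrow> 'v + nat \<times> nat) \<Rightarrow> ('f, 'c, 'v, 'vn) rule \<Rightarrow> ('f, 'c, 'v, 'vn) rule" where
  "rename_rule \<rho> r =
     (map (subst (\<lambda>x. Var (\<rho> x))) (fst r),
      map (\<lambda>(V, ts). (V, map (subst (\<lambda>x. Var (\<rho> x))) ts)) (snd r))"

definition variant :: "('f, 'c, 'v, 'vn) rule \<Rightarrow> ('f, 'c, 'v, 'vn) rule \<Rightarrow> bool" where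
  "variant r1 r2 \<longleftrightarrow> (\<exists>\<rho>. bij \<rho> \<and> r2 = rename_rule \<rho> r1)"

text \<open>Pi is a minimal (up to renaming) set of rules containing (a variant of) every rule
of the unfolding: the rule set of unf(q(x), M).\<close>

definition is_unfolding ::
  "'v list \<Rightarrow> ('l \<times> 'v list) list \<Rightarrow> ('l, 'f, 'vn) mapping set \<Rightarrow> ('f, 'c, 'v, 'vn) rule set \<Rightarrow> bool" where
  "is_unfolding xs atoms M \<Pi> \<longleftrightarrow>
     (\<forall>r\<in>unf_rules xs atoms M. \<exists>r'\<in>\<Pi>. variant r r') \<and>
     (\<forall>r'\<in>\<Pi>. \<exists>r\<in>unf_rules xs atoms M. variant r r') \<and>
     (\<forall>r1\<in>\<Pi>. \<forall>r2\<in>\<Pi>. variant r1 r2 \<longrightarrow> r1 = r2)"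

text \<open>ext V is the extension V^D (set of tuples of constants).  Answers of a rule: the
ground instances of its head under assignments satisfying the body.\<close>

definition rule_ans ::
  "('vn \<Rightarrow> 'c list set) \<Rightarrow> ('f, 'c, 'v, 'vn) rule \<Rightarrow> ('f, 'c, 'v) utm list set" where
  "rule_ans ext r =
     {map (subst (\<lambda>x. Cst (\<nu> x))) (fst r) | \<nu>.
        \<forall>(V, ts)\<in>set (snd r). \<exists>cs\<in>ext V. map (subst (\<lambda>x. Cst (\<nu> x))) ts = (map Cst cs :: ('f, 'c, 'v) utm list)}"

definition unf_ans ::
  "('vn \<Rightarrow> 'c list set) \<Rightarrow> ('f, 'c, 'v, 'vn) rule set \<Rightarrow> ('f, 'c, 'v) utm list set" where
  "unf_ans ext \<Pi> = (\<Union>r\<in>\<Pi>. rule_ans ext r)"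

fun canon :: "('f \<Rightarrow> nat) \<Rightarrow> nat \<Rightarrow> 'f list \<Rightarrow> ('f \<times> nat list) list" where
  "canon ar k [] = []"
| "canon ar k (f # fs) = (f, [k..<k + ar f]) # canon ar (k + ar f) fs"

text \<open>The fresh view W for signature s is named by s itself.\<close>

definition wrap_mapping :: "('f \<Rightarrow> nat) \<Rightarrow> 'l \<times> 'f list \<Rightarrow> ('l, 'f, 'l \<times> 'f list) mapping" where
  "wrap_mapping ar s =
     Mapping (fst s) (canon ar 0 (snd s)) s (concat (map snd (canon ar 0 (snd s))))"

definition wrap :: "('f \<Rightarrow> nat) \<Rightarrow> ('l, 'f, 'vn) mapping set \<Rightarrow> ('l, 'f, 'l \<times> 'f list) mapping set" where
  "wrap ar M = wrap_mapping ar ` sign ` M"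

definition wrap_ext ::
  "('vn \<Rightarrow> 'c list set) \<Rightarrow> ('l, 'f, 'vn) mapping set \<Rightarrow> 'l \<times> 'f list \<Rightarrow> 'c list set" where
  "wrap_ext ext M s = (\<Union>m\<in>{m\<in>M. sign m = s}. ext (m_view m))"

end

(* For a tuple of mappings with an mgu, the answers of the unfolding rule do not depend on the
   mgu: they are the values on the query variables of those unifiers whose view arguments are
   ground and lie in the view extensions (each head variable of a mapping occurs in its view).
   The wrapped mapping of a signature is a renamed copy of every mapping with that signature,
   and its view is the union of their views; so a tuple and its wrapped copy have the same
   unifiers up to renaming, and the two unfoldings have the same answers.  In the wrapped
   unfolding, distinct rules come from tuples with distinct lists of signatures.  As every
   query variable occurs in the body, an answer shows the function symbol at each argument
   position, hence the signatures of its tuple; so distinct rules have disjoint answer sets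
   and the cardinality of their union is the sum. *)

theory Submission
  imports Defs "HOL-Combinatorics.Transposition"
begin

section \<open>Terms and renamings\<close>

fun vars_tm :: "('f, 'c, 'x) tm \<Rightarrow> 'x set" where
  "vars_tm (Var x) = {x}"
| "vars_tm (Cst c) = {}"
| "vars_tm (Fn f ts) = (\<Union>t\<in>set ts. vars_tm t)"

lemma finite_vars_tm [simp]: "finite (vars_tm t)"
  by (induction t) auto

lemma subst_subst: "subst \<theta> (subst \<sigma> t) = subst (\<lambda>x. subst \<theta> (\<sigma> x)) t"
  by (induction t) auto

lemma subst_cong: "(\<And>y. y \<in> vars_tm t \<Longrightarrow> \<theta> y = \<theta>' y) \<Longrightarrow> subst \<theta> t = subst \<theta>' t"
  by (induction t) auto

lemma subst_Var [simp]: "subst Var t = t"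
  by (induction t) (auto simp: map_idI)

lemma subst_eq_self_imp_Var: "subst \<theta> t = t \<Longrightarrow> y \<in> vars_tm t \<Longrightarrow> \<theta> y = Var y"
proof (induction t)
  case (Fn f ts)
  then obtain t where "t \<in> set ts" "y \<in> vars_tm t" by auto
  moreover have "map (subst \<theta>) ts = map id ts" using Fn.prems by simp
  ultimately show ?case using Fn.IH by (metis id_apply map_eq_conv)
qed auto

lemma subst_eq_Cst: "subst \<theta> t = Cst c \<Longrightarrow> y \<in> vars_tm t \<Longrightarrow> \<theta> y = Cst c"
  by (cases t) auto

lemma subst_eq_Var: "subst \<theta> t = Var y \<Longrightarrow> \<exists>z. t = Var z \<and> \<theta> z = Var y"
  by (cases t) auto

lemma inj_on_extend_bij:
  fixes g :: "'a \<Rightarrow> 'a"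
  assumes "finite V" "inj_on g V"
  shows "\<exists>\<rho>. bij \<rho> \<and> (\<forall>y\<in>V. \<rho> y = g y)"
  using assms
proof (induction V rule: finite_induct)
  case empty
  show ?case by (intro exI[of _ id] conjI bij_id) simp
next
  case (insert a V)
  have "inj_on g V" using insert.prems by (rule inj_on_subset) blast
  then obtain \<rho> where \<rho>: "bij \<rho>" "\<forall>y\<in>V. \<rho> y = g y" using insert.IH by blast
  have "\<rho> a \<notin> \<rho> ` V"
    using insert.hyps(2) bij_is_inj[OF \<rho>(1)] by (simp add: inj_image_mem_iff)
  moreover have "\<rho> ` V = g ` V"
    by (rule image_cong) (simp_all add: \<rho>(2))
  ultimately have \<rho>a: "\<rho> a \<notin> g ` V" by simp
  have ga: "g a \<notin> g ` V"
    using insert.hyps(2) insert.prems by (simp add: inj_on_image_mem_iff)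
  define \<rho>' where "\<rho>' = Transposition.transpose (\<rho> a) (g a) \<circ> \<rho>"
  have "bij \<rho>'" unfolding \<rho>'_def using \<rho>(1) by (simp add: bij_comp)
  moreover have "\<rho>' y = g y" if "y \<in> V" for y
  proof -
    have "g y \<in> g ` V" using that by (rule imageI)
    then have "g y \<noteq> \<rho> a" "g y \<noteq> g a" using \<rho>a ga by auto
    then show ?thesis using that \<rho>(2) unfolding \<rho>'_def by simp
  qed
  moreover have "\<rho>' a = g a" unfolding \<rho>'_def by simp
  ultimately show ?case by blast
qed

lemma rename_rule_rename_rule: "rename_rule \<rho> (rename_rule \<rho>' r) = rename_rule (\<rho> \<circ> \<rho>') r"
  unfolding rename_rule_def by (auto simp: subst_subst case_prod_unfold)

lemma rename_rule_id: "rename_rule id r = r"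
  unfolding rename_rule_def by (simp add: case_prod_unfold map_idI)

lemma variant_sym: "variant r1 r2 \<Longrightarrow> variant r2 r1"
  unfolding variant_def
  by (metis bij_imp_bij_inv bij_is_inj inv_o_cancel rename_rule_id rename_rule_rename_rule)

lemma variant_trans: "variant r1 r2 \<Longrightarrow> variant r2 r3 \<Longrightarrow> variant r1 r3"
  unfolding variant_def by (metis rename_rule_rename_rule bij_comp)

lemma rule_ans_rename_rule:
  fixes r :: "('f, 'c, 'v, 'vn) rule"
  assumes "bij \<rho>"
  shows "rule_ans E (rename_rule \<rho> r) = rule_ans E r"
proof -
  define F where "F \<nu> = (map (subst (\<lambda>x. Cst (\<nu> x))) (fst r) :: ('f, 'c, 'v) utm list)" for \<nu>
  define P where "P \<nu> \<longleftrightarrow> (\<forall>(V, ts)\<in>set (snd r). \<exists>cs\<in>E V.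
       map (subst (\<lambda>x. Cst (\<nu> x))) ts = (map Cst cs :: ('f, 'c, 'v) utm list))" for \<nu>
  have "rule_ans E (rename_rule \<rho> r) = {F (\<nu> \<circ> \<rho>) | \<nu>. P (\<nu> \<circ> \<rho>)}"
    unfolding rule_ans_def rename_rule_def F_def P_def
    by (simp add: subst_subst comp_def case_prod_unfold)
  also have "\<dots> = {F \<nu> | \<nu>. P \<nu>}"
    using assms by (metis (opaque_lifting) o_inv_o_cancel bij_is_inj)
  finally show ?thesis unfolding rule_ans_def F_def P_def .
qed

lemma rule_ans_variant: "variant r1 r2 \<Longrightarrow> rule_ans E r2 = rule_ans E r1"
  unfolding variant_def using rule_ans_rename_rule by metis

section \<open>Answers of a tuple of mappings\<close>

definition safe_mapping :: "('l, 'f, 'vn) mapping \<Rightarrow> bool" where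
  "safe_mapping m \<longleftrightarrow> (\<forall>(f, ys)\<in>set (m_head m). set ys \<subseteq> set (m_vars m))"

text \<open>The extension of the view at position \<open>i\<close> is \<open>X i\<close>; indexing extensions by
  position lets a tuple and its wrapped copy be evaluated against the same views.\<close>

definition tuple_ans ::
  "'v list \<Rightarrow> ('l \<times> 'v list) list \<Rightarrow> ('l, 'f, 'vn) mapping list \<Rightarrow> (nat \<Rightarrow> 'c list set)
     \<Rightarrow> ('f, 'c, 'v) utm list set" where
  "tuple_ans xs atoms ms X = {map (\<lambda>x. \<tau> (Inl x)) xs | \<tau>. unifier atoms ms \<tau> \<and>
     (\<forall>i<length ms. map (\<lambda>z. \<tau> (Inr (i, z))) (m_vars (ms ! i)) \<in> map Cst ` X i)}"

lemma tuple_ans_memI: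
  assumes "unifier atoms ms \<tau>"
    and "\<And>i. i < length ms \<Longrightarrow> map (\<lambda>z. \<tau> (Inr (i, z))) (m_vars (ms ! i)) \<in> map Cst ` X i"
  shows "map (\<lambda>x. \<tau> (Inl x)) xs \<in> tuple_ans xs atoms ms X"
  using assms unfolding tuple_ans_def by blast

lemma tuple_ans_memE:
  assumes "a \<in> tuple_ans xs atoms ms X"
  obtains \<tau> where "a = map (\<lambda>x. \<tau> (Inl x)) xs" "unifier atoms ms \<tau>"
    "\<forall>i<length ms. map (\<lambda>z. \<tau> (Inr (i, z))) (m_vars (ms ! i)) \<in> map Cst ` X i"
  using assms unfolding tuple_ans_def by blast

lemma map_Cst_imageD:
  assumes "map f vs \<in> map Cst ` A" "z \<in> set vs"
  shows "f z \<in> Cst ` (\<Union>(set ` A))"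
proof -
  obtain cs where "cs \<in> A" "map f vs = map Cst cs" using assms(1) by blast
  moreover have "f z \<in> set (map f vs)" using assms(2) by simp
  ultimately show ?thesis by auto
qed

lemma unifier_subst: "unifier atoms ms \<sigma> \<Longrightarrow> unifier atoms ms (\<lambda>x. subst \<theta> (\<sigma> x))"
  unfolding unifier_def by (simp add: subst_subst[symmetric])

lemma unifier_nth:
  assumes "unifier atoms ms \<tau>" "i < length atoms" "k < length (snd (atoms ! i))"
    and "m_head (ms ! i) ! k = (f, ys)"
  shows "\<tau> (Inl (snd (atoms ! i) ! k)) = Fn f (map (\<lambda>y. \<tau> (Inr (i, y))) ys)"
  using assms unfolding unifier_def by (simp add: head_term_def comp_def)

lemma unifier_query_var:
  assumes "unifier atoms ms \<tau>" "x \<in> (\<Union>a\<in>set atoms. set (snd a))"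
  obtains i f ys where "i < length ms" "(f, ys) \<in> set (m_head (ms ! i))"
    "\<tau> (Inl x) = Fn f (map (\<lambda>y. \<tau> (Inr (i, y))) ys)"
proof -
  obtain i k where i: "i < length atoms" and k: "k < length (snd (atoms ! i))" "snd (atoms ! i) ! k = x"
    using assms(2) by (metis UN_E in_set_conv_nth)
  obtain f ys where fys: "m_head (ms ! i) ! k = (f, ys)" by fastforce
  have "length ms = length atoms" "length (snd (atoms ! i)) = length (m_head (ms ! i))"
    using assms(1) i unfolding unifier_def by auto
  then show ?thesis
    using that[of i f ys] unifier_nth[OF assms(1) i k(1) fys] i k fys by (metis nth_mem)
qed

fun fn_sym :: "('f, 'c, 'x) tm \<Rightarrow> 'f" where
  "fn_sym (Fn f ts) = f"
| "fn_sym _ = undefined"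

lemma unifier_sign:
  assumes "unifier atoms ms \<tau>" "i < length atoms"
  shows "sign (ms ! i) = (fst (atoms ! i), map (\<lambda>v. fn_sym (\<tau> (Inl v))) (snd (atoms ! i)))"
proof -
  have "fst (atoms ! i) = m_pred (ms ! i)" "length (snd (atoms ! i)) = length (m_head (ms ! i))"
    using assms unfolding unifier_def by auto
  moreover have "fn_sym (\<tau> (Inl (snd (atoms ! i) ! k))) = fst (m_head (ms ! i) ! k)"
    if "k < length (snd (atoms ! i))" for k
    using unifier_nth[OF assms that] by (metis fn_sym.simps(1) prod.collapse)
  ultimately show ?thesis
    unfolding sign_def by (auto intro!: nth_equalityI)
qed

lemma unifiers_eq_on_query_vars:
  assumes "unifier atoms ms \<tau>1" "unifier atoms ms \<tau>2" "\<forall>m\<in>set ms. safe_mapping m"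
    and "\<forall>i<length ms. \<forall>z\<in>set (m_vars (ms ! i)). \<tau>1 (Inr (i, z)) = \<tau>2 (Inr (i, z))"
    and "x \<in> (\<Union>a\<in>set atoms. set (snd a))"
  shows "\<tau>1 (Inl x) = \<tau>2 (Inl x)"
proof -
  obtain i k where i: "i < length atoms" and k: "k < length (snd (atoms ! i))" "snd (atoms ! i) ! k = x"
    using assms(5) by (metis UN_E in_set_conv_nth)
  obtain f ys where fys: "m_head (ms ! i) ! k = (f, ys)" by fastforce
  have l: "length ms = length atoms" "length (snd (atoms ! i)) = length (m_head (ms ! i))"
    using assms(1) i unfolding unifier_def by auto
  have i': "i < length ms" using l i by simp
  moreover have "(f, ys) \<in> set (m_head (ms ! i))" using l k fys by (metis nth_mem)
  ultimately have "set ys \<subseteq> set (m_vars (ms ! i))"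
    using assms(3) unfolding safe_mapping_def by fastforce
  then show ?thesis
    using i' unifier_nth[OF assms(1) i k(1) fys] unifier_nth[OF assms(2) i k(1) fys] assms(4) k(2)
    by (auto intro!: map_cong)
qed

lemma tuple_ans_mono:
  "(\<And>i. i < length ms \<Longrightarrow> X i \<subseteq> Y i) \<Longrightarrow> tuple_ans xs atoms ms X \<subseteq> tuple_ans xs atoms ms Y"
  unfolding tuple_ans_def by blast

lemma tuple_ans_disjoint:
  fixes ms1 ms2 :: "('l, 'f, 'vn) mapping list" and X1 X2 :: "nat \<Rightarrow> 'c list set"
    and xs :: "'v list"
  assumes "set xs = (\<Union>a\<in>set atoms. set (snd a))" "map sign ms1 \<noteq> map sign ms2"
  shows "tuple_ans xs atoms ms1 X1 \<inter> tuple_ans xs atoms ms2 X2 = {}"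
proof (rule ccontr)
  assume "tuple_ans xs atoms ms1 X1 \<inter> tuple_ans xs atoms ms2 X2 \<noteq> {}"
  then obtain \<tau>1 \<tau>2 :: "'v + nat \<times> nat \<Rightarrow> ('f, 'c, 'v) utm"
    where u: "unifier atoms ms1 \<tau>1" "unifier atoms ms2 \<tau>2"
    and eq: "map (\<lambda>x. \<tau>1 (Inl x)) xs = map (\<lambda>x. \<tau>2 (Inl x)) xs"
    unfolding tuple_ans_def by auto
  have "length ms1 = length atoms" "length ms2 = length atoms"
    using u unfolding unifier_def by auto
  moreover have "sign (ms1 ! i) = sign (ms2 ! i)" if i: "i < length atoms" for i
  proof -
    have "\<forall>v\<in>set (snd (atoms ! i)). \<tau>1 (Inl v) = \<tau>2 (Inl v)"
      using eq assms(1) i by auto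
    then show ?thesis
      unfolding unifier_sign[OF u(1) i] unifier_sign[OF u(2) i] by simp
  qed
  ultimately have "map sign ms1 = map sign ms2"
    by (auto intro!: nth_equalityI)
  then show False using assms(2) by contradiction
qed

lemma finite_tuple_ans:
  fixes ms :: "('l, 'f, 'vn) mapping list" and X :: "nat \<Rightarrow> 'c list set" and xs :: "'v list"
  assumes "\<forall>i<length ms. finite (X i)" "\<forall>m\<in>set ms. safe_mapping m"
    and "set xs \<subseteq> (\<Union>a\<in>set atoms. set (snd a))"
  shows "finite (tuple_ans xs atoms ms X)"
proof -
  define C :: "('f, 'c, 'v) utm set" where "C = Cst ` (\<Union>i<length ms. \<Union>(set ` X i))"
  define H where "H = (\<Union>m\<in>set ms. set (m_head m))"
  define T where "T = (\<Union>h\<in>H. Fn (fst h) ` {ts. set ts \<subseteq> C \<and> length ts = length (snd h)})"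
  have "finite C"
    unfolding C_def using assms(1) by (intro finite_imageI finite_UN_I) auto
  then have "finite T"
    unfolding T_def H_def by (intro finite_UN_I finite_imageI finite_lists_length_eq) auto
  have "\<tau> (Inl x) \<in> T"
    if \<tau>: "unifier atoms ms \<tau>" "\<forall>i<length ms. map (\<lambda>z. \<tau> (Inr (i, z))) (m_vars (ms ! i)) \<in> map Cst ` X i"
      and x: "x \<in> set xs" for \<tau> x
  proof -
    have "x \<in> (\<Union>a\<in>set atoms. set (snd a))" using x assms(3) by blast
    then obtain i f ys where i: "i < length ms" "(f, ys) \<in> set (m_head (ms ! i))"
      and \<tau>x: "\<tau> (Inl x) = Fn f (map (\<lambda>y. \<tau> (Inr (i, y))) ys)"
      by (rule unifier_query_var[OF \<tau>(1)])
    have "safe_mapping (ms ! i)" using assms(2) i(1) by simp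
    then have "set ys \<subseteq> set (m_vars (ms ! i))"
      using i(2) unfolding safe_mapping_def by blast
    moreover have "Cst ` \<Union>(set ` X i) \<subseteq> C"
      unfolding C_def using i(1) by (intro image_mono) blast
    ultimately have "set (map (\<lambda>y. \<tau> (Inr (i, y))) ys) \<subseteq> C"
      using map_Cst_imageD[OF \<tau>(2)[rule_format, OF i(1)]] by (auto dest!: subsetD)
    moreover have "(f, ys) \<in> H" unfolding H_def using i by auto
    ultimately show ?thesis
      unfolding T_def \<tau>x by (intro UN_I[of "(f, ys)"] imageI) auto
  qed
  then have "tuple_ans xs atoms ms X \<subseteq> {as. set as \<subseteq> T \<and> length as = length xs}"
    unfolding tuple_ans_def by auto
  then show ?thesis
    using finite_lists_length_eq[OF \<open>finite T\<close>] by (rule finite_subset)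
qed

lemma mgu_ground_instance:
  assumes "mgu atoms ms \<sigma>" "unifier atoms ms \<tau>" "\<forall>v\<in>Z. \<tau> v \<in> range Cst"
  shows "\<exists>\<nu>. \<forall>v\<in>Z. subst (\<lambda>y. Cst (\<nu> y)) (\<sigma> v) = \<tau> v"
proof -
  obtain \<theta> where \<theta>: "\<forall>v. \<tau> v = subst \<theta> (\<sigma> v)" using assms(1,2) unfolding mgu_def by blast
  define \<nu> where "\<nu> = (\<lambda>y. case \<theta> y of Cst c \<Rightarrow> c | _ \<Rightarrow> undefined)"
  have "subst (\<lambda>y. Cst (\<nu> y)) (\<sigma> v) = \<tau> v" if "v \<in> Z" for v
  proof -
    have "\<tau> v \<in> range Cst" using assms(3) that ..
    then obtain c where "\<tau> v = Cst c" by (rule rangeE)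
    then have c: "subst \<theta> (\<sigma> v) = Cst c" using \<theta> by simp
    then have "subst (\<lambda>y. Cst (\<nu> y)) (\<sigma> v) = subst \<theta> (\<sigma> v)"
      by (intro subst_cong) (simp add: \<nu>_def subst_eq_Cst[OF c])
    then show ?thesis using \<theta> by simp
  qed
  then show ?thesis by blast
qed

lemma mgu_ground_instance_tuple:
  fixes atoms :: "('l \<times> 'v list) list"
  assumes "mgu atoms ms \<sigma>" "unifier atoms ms \<tau>" "\<forall>m\<in>set ms. safe_mapping m"
    and "\<forall>i<length ms. \<forall>z\<in>set (m_vars (ms ! i)). \<tau> (Inr (i, z)) \<in> range Cst"
  obtains \<nu> where
    "\<And>i z. i < length ms \<Longrightarrow> z \<in> set (m_vars (ms ! i)) \<Longrightarrow>
      subst (\<lambda>y. Cst (\<nu> y)) (\<sigma> (Inr (i, z))) = \<tau> (Inr (i, z))"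
    "\<And>x. x \<in> (\<Union>a\<in>set atoms. set (snd a)) \<Longrightarrow> subst (\<lambda>y. Cst (\<nu> y)) (\<sigma> (Inl x)) = \<tau> (Inl x)"
proof -
  define Z :: "('v + nat \<times> nat) set" where "Z = {Inr (i, z) | i z. i < length ms \<and> z \<in> set (m_vars (ms ! i))}"
  have "\<forall>v\<in>Z. \<tau> v \<in> range Cst" using assms(4) unfolding Z_def by blast
  then obtain \<nu> where \<nu>: "\<forall>v\<in>Z. subst (\<lambda>y. Cst (\<nu> y)) (\<sigma> v) = \<tau> v"
    using mgu_ground_instance[OF assms(1,2)] by blast
  then have body: "subst (\<lambda>y. Cst (\<nu> y)) (\<sigma> (Inr (i, z))) = \<tau> (Inr (i, z))"
    if "i < length ms" "z \<in> set (m_vars (ms ! i))" for i z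
    using that unfolding Z_def by blast
  have "unifier atoms ms (\<lambda>v. subst (\<lambda>y. Cst (\<nu> y)) (\<sigma> v))"
    by (rule unifier_subst) (use assms(1) in \<open>simp add: mgu_def\<close>)
  from unifiers_eq_on_query_vars[OF this assms(2,3)] body
  have "subst (\<lambda>y. Cst (\<nu> y)) (\<sigma> (Inl x)) = \<tau> (Inl x)" if "x \<in> (\<Union>a\<in>set atoms. set (snd a))" for x
    using that by blast
  with body show ?thesis using that by blast
qed

lemma rule_ans_unf_rule:
  fixes \<sigma> :: "'v + nat \<times> nat \<Rightarrow> ('f, 'c, 'v) utm"
  shows "rule_ans E (unf_rule xs ms \<sigma>) = {map (\<lambda>x. subst (\<lambda>y. Cst (\<nu> y)) (\<sigma> (Inl x))) xs | \<nu>.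
     \<forall>i<length ms. map (\<lambda>z. subst (\<lambda>y. Cst (\<nu> y)) (\<sigma> (Inr (i, z)))) (m_vars (ms ! i))
       \<in> (map Cst ` E (m_view (ms ! i)) :: ('f, 'c, 'v) utm list set)}"
proof -
  have body: "(\<forall>(V, ts)\<in>set (snd (unf_rule xs ms \<sigma>)). Q V ts) \<longleftrightarrow>
      (\<forall>i<length ms. Q (m_view (ms ! i)) (map (\<lambda>z. \<sigma> (Inr (i, z))) (m_vars (ms ! i))))" for Q
    by (auto simp: unf_rule_def)
  show ?thesis
    unfolding rule_ans_def body by (simp add: unf_rule_def comp_def image_iff)
qed

lemma rule_ans_unf_rule_subset:
  fixes \<sigma> :: "'v + nat \<times> nat \<Rightarrow> ('f, 'c, 'v) utm"
  assumes "unifier atoms ms \<sigma>"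
  shows "rule_ans E (unf_rule xs ms \<sigma>) \<subseteq> tuple_ans xs atoms ms (\<lambda>i. E (m_view (ms ! i)))"
proof
  fix a assume "a \<in> rule_ans E (unf_rule xs ms \<sigma>)"
  then obtain \<nu> where a: "a = map (\<lambda>x. subst (\<lambda>y. Cst (\<nu> y)) (\<sigma> (Inl x))) xs"
    and body: "\<forall>i<length ms. map (\<lambda>z. subst (\<lambda>y. Cst (\<nu> y)) (\<sigma> (Inr (i, z)))) (m_vars (ms ! i))
       \<in> (map Cst ` E (m_view (ms ! i)) :: ('f, 'c, 'v) utm list set)"
    unfolding rule_ans_unf_rule by blast
  show "a \<in> tuple_ans xs atoms ms (\<lambda>i. E (m_view (ms ! i)))"
    unfolding a using body by (intro tuple_ans_memI[OF unifier_subst[OF assms]]) simp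
qed

lemma rule_ans_unf_rule_mgu:
  fixes \<sigma> :: "'v + nat \<times> nat \<Rightarrow> ('f, 'c, 'v) utm"
  assumes "mgu atoms ms \<sigma>" "\<forall>m\<in>set ms. safe_mapping m"
    and "set xs \<subseteq> (\<Union>a\<in>set atoms. set (snd a))"
  shows "rule_ans E (unf_rule xs ms \<sigma>) = tuple_ans xs atoms ms (\<lambda>i. E (m_view (ms ! i)))"
proof
  show "rule_ans E (unf_rule xs ms \<sigma>) \<subseteq> tuple_ans xs atoms ms (\<lambda>i. E (m_view (ms ! i)))"
    by (rule rule_ans_unf_rule_subset) (use assms(1) in \<open>simp add: mgu_def\<close>)
next
  show "tuple_ans xs atoms ms (\<lambda>i. E (m_view (ms ! i))) \<subseteq> rule_ans E (unf_rule xs ms \<sigma>)"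
  proof
    fix a assume "a \<in> tuple_ans xs atoms ms (\<lambda>i. E (m_view (ms ! i)))"
    then obtain \<tau> where a: "a = map (\<lambda>x. \<tau> (Inl x)) xs" and \<tau>: "unifier atoms ms \<tau>"
      and body: "\<forall>i<length ms. map (\<lambda>z. \<tau> (Inr (i, z))) (m_vars (ms ! i)) \<in> map Cst ` E (m_view (ms ! i))"
      by (rule tuple_ans_memE)
    have "\<tau> (Inr (i, z)) \<in> range Cst" if i: "i < length ms" and z: "z \<in> set (m_vars (ms ! i))" for i z
      using map_Cst_imageD[OF body[rule_format, OF i] z] by blast
    then obtain \<nu> where
      \<nu>_body: "\<And>i z. i < length ms \<Longrightarrow> z \<in> set (m_vars (ms ! i)) \<Longrightarrow>
        subst (\<lambda>y. Cst (\<nu> y)) (\<sigma> (Inr (i, z))) = \<tau> (Inr (i, z))"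
      and \<nu>_query: "\<And>x. x \<in> (\<Union>a\<in>set atoms. set (snd a)) \<Longrightarrow>
        subst (\<lambda>y. Cst (\<nu> y)) (\<sigma> (Inl x)) = \<tau> (Inl x)"
      using mgu_ground_instance_tuple[OF assms(1) \<tau> assms(2)] by blast
    have "a = map (\<lambda>x. subst (\<lambda>y. Cst (\<nu> y)) (\<sigma> (Inl x))) xs"
      unfolding a by (rule map_cong[OF refl], rule \<nu>_query[symmetric]) (use assms(3) in blast)
    moreover have "map (\<lambda>z. subst (\<lambda>y. Cst (\<nu> y)) (\<sigma> (Inr (i, z)))) (m_vars (ms ! i))
        \<in> (map Cst ` E (m_view (ms ! i)) :: ('f, 'c, 'v) utm list set)" if i: "i < length ms" for i
    proof -
      have eq: "map (\<lambda>z. subst (\<lambda>y. Cst (\<nu> y)) (\<sigma> (Inr (i, z)))) (m_vars (ms ! i))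
          = map (\<lambda>z. \<tau> (Inr (i, z))) (m_vars (ms ! i))"
        by (rule map_cong[OF refl]) (rule \<nu>_body[OF i])
      show ?thesis unfolding eq by (rule body[rule_format, OF i])
    qed
    ultimately show "a \<in> rule_ans E (unf_rule xs ms \<sigma>)"
      unfolding rule_ans_unf_rule mem_Collect_eq by (intro exI[of _ \<nu>] conjI allI impI)
  qed
qed

lemma subst_inverse_imp_renaming:
  fixes \<theta> \<theta>' :: "'x \<Rightarrow> ('f, 'c, 'x) tm"
  assumes "finite X" "\<forall>v\<in>X. subst \<theta>' (subst \<theta> (t v)) = t v"
  shows "\<exists>\<rho>. bij \<rho> \<and> (\<forall>v\<in>X. subst (\<lambda>y. Var (\<rho> y)) (t v) = subst \<theta> (t v))"
proof -
  define V where "V = (\<Union>v\<in>X. vars_tm (t v))"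
  have "finite V" unfolding V_def using assms(1) by simp
  define g where "g y = (case \<theta> y of Var z \<Rightarrow> z | _ \<Rightarrow> y)" for y
  have g: "\<theta> y = Var (g y) \<and> \<theta>' (g y) = Var y" if y: "y \<in> V" for y
  proof -
    obtain v where v: "v \<in> X" "y \<in> vars_tm (t v)" using y unfolding V_def by blast
    have "subst (\<lambda>x. subst \<theta>' (\<theta> x)) (t v) = t v"
      using assms(2) v(1) by (simp add: subst_subst)
    then have "subst \<theta>' (\<theta> y) = Var y" using v(2) by (rule subst_eq_self_imp_Var)
    then show ?thesis unfolding g_def using subst_eq_Var by fastforce
  qed
  then have "inj_on g V"
    by (metis inj_onI tm.inject(1))
  then obtain \<rho> where \<rho>: "bij \<rho>" "\<forall>y\<in>V. \<rho> y = g y"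
    using inj_on_extend_bij[OF \<open>finite V\<close>] by blast
  have "subst (\<lambda>y. Var (\<rho> y)) (t v) = subst \<theta> (t v)" if v: "v \<in> X" for v
  proof (rule subst_cong)
    fix y assume "y \<in> vars_tm (t v)"
    then have "y \<in> V" unfolding V_def using v by blast
    then show "Var (\<rho> y) = \<theta> y" using g \<rho>(2) by simp
  qed
  then show ?thesis using \<rho>(1) by blast
qed

lemma mgu_unique_up_to_renaming:
  assumes "mgu atoms ms \<sigma>1" "mgu atoms ms \<sigma>2" "finite X"
  shows "\<exists>\<rho>. bij \<rho> \<and> (\<forall>v\<in>X. subst (\<lambda>y. Var (\<rho> y)) (\<sigma>1 v) = \<sigma>2 v)"
proof -
  obtain \<theta> \<theta>' where \<theta>: "\<forall>v. \<sigma>2 v = subst \<theta> (\<sigma>1 v)" and \<theta>': "\<forall>v. \<sigma>1 v = subst \<theta>' (\<sigma>2 v)"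
    using assms(1,2) unfolding mgu_def by meson
  have "\<forall>v\<in>X. subst \<theta>' (subst \<theta> (\<sigma>1 v)) = \<sigma>1 v"
    using \<theta> \<theta>' by simp
  then show ?thesis
    using subst_inverse_imp_renaming[OF assms(3)] \<theta> by simp
qed

lemma variant_unf_rule_mgu:
  assumes "mgu atoms ms \<sigma>1" "mgu atoms ms \<sigma>2"
  shows "variant (unf_rule xs ms \<sigma>1) (unf_rule xs ms \<sigma>2)"
proof -
  define X where "X = Inl ` set xs \<union> (\<Union>i<length ms. (\<lambda>z. Inr (i, z)) ` set (m_vars (ms ! i)))"
  have "finite X" unfolding X_def by simp
  then obtain \<rho> where \<rho>: "bij \<rho>" and ren: "\<forall>v\<in>X. subst (\<lambda>y. Var (\<rho> y)) (\<sigma>1 v) = \<sigma>2 v"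
    using mgu_unique_up_to_renaming[OF assms] by blast
  have "x \<in> set xs \<Longrightarrow> subst (\<lambda>y. Var (\<rho> y)) (\<sigma>1 (Inl x)) = \<sigma>2 (Inl x)"
    and "i < length ms \<Longrightarrow> z \<in> set (m_vars (ms ! i)) \<Longrightarrow>
      subst (\<lambda>y. Var (\<rho> y)) (\<sigma>1 (Inr (i, z))) = \<sigma>2 (Inr (i, z))" for x i z
    using ren unfolding X_def by auto
  then have "rename_rule \<rho> (unf_rule xs ms \<sigma>1) = unf_rule xs ms \<sigma>2"
    unfolding rename_rule_def unf_rule_def by simp
  then show ?thesis unfolding variant_def using \<rho> by (intro exI[of _ \<rho>]) simp
qed

section \<open>Unfoldings\<close>

definition unfolds_from ::
  "'v list \<Rightarrow> ('l \<times> 'v list) list \<Rightarrow> ('l, 'f, 'vn) mapping list \<Rightarrow> ('f, 'c, 'v, 'vn) rule \<Rightarrow> bool" where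
  "unfolds_from xs atoms ms r \<longleftrightarrow> (\<exists>\<sigma>. mgu atoms ms \<sigma> \<and> variant (unf_rule xs ms \<sigma>) r)"

lemma unfolding_rule_origin:
  assumes "is_unfolding xs atoms M \<Pi>" "r \<in> \<Pi>"
  obtains ms where "set ms \<subseteq> M" "unfolds_from xs atoms ms r"
proof -
  obtain r' where "r' \<in> unf_rules xs atoms M" "variant r' r"
    using assms unfolding is_unfolding_def by blast
  then obtain ms \<sigma> where "set ms \<subseteq> M" "mgu atoms ms \<sigma>" "variant (unf_rule xs ms \<sigma>) r"
    unfolding unf_rules_def by blast
  then show ?thesis using that unfolding unfolds_from_def by blast
qed

lemma unfolds_from_length: "unfolds_from xs atoms ms r \<Longrightarrow> length ms = length atoms"
  unfolding unfolds_from_def mgu_def unifier_def by blast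

lemma unfolding_rule_unique:
  assumes "is_unfolding xs atoms M \<Pi>" "r1 \<in> \<Pi>" "r2 \<in> \<Pi>"
    and "unfolds_from xs atoms ms r1" "unfolds_from xs atoms ms r2"
  shows "r1 = r2"
proof -
  obtain \<sigma>1 \<sigma>2 where \<sigma>1: "mgu atoms ms \<sigma>1" "variant (unf_rule xs ms \<sigma>1) r1"
    and \<sigma>2: "mgu atoms ms \<sigma>2" "variant (unf_rule xs ms \<sigma>2) r2"
    using assms(4,5) unfolding unfolds_from_def by blast
  have "variant r1 (unf_rule xs ms \<sigma>2)"
    using variant_trans[OF variant_sym[OF \<sigma>1(2)] variant_unf_rule_mgu[OF \<sigma>1(1) \<sigma>2(1)]] .
  then have "variant r1 r2" using \<sigma>2(2) by (rule variant_trans)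
  then show ?thesis using assms(1-3) unfolding is_unfolding_def by blast
qed

lemma finite_unfolding:
  assumes "finite M" "is_unfolding xs atoms M \<Pi>"
  shows "finite \<Pi>"
proof -
  let ?T = "{ms. set ms \<subseteq> M \<and> length ms = length atoms}"
  have "\<Pi> \<subseteq> (\<Union>ms\<in>?T. {r \<in> \<Pi>. unfolds_from xs atoms ms r})"
  proof
    fix r assume "r \<in> \<Pi>"
    then obtain ms where ms: "set ms \<subseteq> M" "unfolds_from xs atoms ms r"
      by (rule unfolding_rule_origin[OF assms(2)])
    then have "length ms = length atoms" by (intro unfolds_from_length)
    then show "r \<in> (\<Union>ms\<in>?T. {r \<in> \<Pi>. unfolds_from xs atoms ms r})"
      using \<open>r \<in> \<Pi>\<close> ms by (intro UN_I[of ms]) simp_all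
  qed
  moreover have "finite {r \<in> \<Pi>. unfolds_from xs atoms ms r}" for ms
  proof (cases "\<exists>r\<in>\<Pi>. unfolds_from xs atoms ms r")
    case True
    then obtain r where "r \<in> \<Pi>" "unfolds_from xs atoms ms r" by blast
    then have "{r \<in> \<Pi>. unfolds_from xs atoms ms r} \<subseteq> {r}"
      using unfolding_rule_unique[OF assms(2)] by blast
    then show ?thesis by (rule finite_subset) simp
  next
    case False
    then have empty: "{r \<in> \<Pi>. unfolds_from xs atoms ms r} = {}" by blast
    show ?thesis unfolding empty by (rule finite.emptyI)
  qed
  moreover have "finite ?T" using finite_lists_length_eq[OF assms(1)] .
  ultimately show ?thesis by (meson finite_UN_I finite_subset)
qed

lemma unf_ans_unfolding:
  assumes "is_unfolding xs atoms M \<Pi>"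
  shows "unf_ans E \<Pi> = (\<Union>r\<in>unf_rules xs atoms M. rule_ans E r)"
proof (intro equalityI subsetI)
  fix a assume "a \<in> unf_ans E \<Pi>"
  then obtain r where r: "r \<in> \<Pi>" "a \<in> rule_ans E r" unfolding unf_ans_def by blast
  then obtain r' where r': "r' \<in> unf_rules xs atoms M" "variant r' r"
    using assms unfolding is_unfolding_def by blast
  have "a \<in> rule_ans E r'" using r(2) unfolding rule_ans_variant[OF r'(2)] .
  then show "a \<in> (\<Union>r\<in>unf_rules xs atoms M. rule_ans E r)" using r'(1) by (rule UN_I[rotated])
next
  fix a assume "a \<in> (\<Union>r\<in>unf_rules xs atoms M. rule_ans E r)"
  then obtain r where r: "r \<in> unf_rules xs atoms M" "a \<in> rule_ans E r" by blast
  then obtain r' where r': "r' \<in> \<Pi>" "variant r r'"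
    using assms unfolding is_unfolding_def by blast
  have "a \<in> rule_ans E r'" using r(2) unfolding rule_ans_variant[OF r'(2)] .
  then show "a \<in> unf_ans E \<Pi>" unfolding unf_ans_def using r'(1) by (rule UN_I[rotated])
qed

lemma rule_ans_unfolds_from_subset:
  assumes "unfolds_from xs atoms ms r"
  shows "rule_ans E r \<subseteq> tuple_ans xs atoms ms (\<lambda>i. E (m_view (ms ! i)))"
proof -
  obtain \<sigma> where "mgu atoms ms \<sigma>" "variant (unf_rule xs ms \<sigma>) r"
    using assms unfolding unfolds_from_def by blast
  then show ?thesis
    using rule_ans_unf_rule_subset rule_ans_variant unfolding mgu_def by metis
qed

lemma finite_rule_ans_unfolding:
  assumes "is_unfolding xs atoms M \<Pi>" "\<forall>m\<in>M. safe_mapping m" "\<forall>V. finite (E V)"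
    and "set xs \<subseteq> (\<Union>a\<in>set atoms. set (snd a))" "r \<in> \<Pi>"
  shows "finite (rule_ans E r)"
proof -
  obtain ms where ms: "set ms \<subseteq> M" "unfolds_from xs atoms ms r"
    using unfolding_rule_origin[OF assms(1,5)] .
  have "finite (tuple_ans xs atoms ms (\<lambda>i. E (m_view (ms ! i))))"
    using ms(1) assms(2-4) by (intro finite_tuple_ans) auto
  then show ?thesis using rule_ans_unfolds_from_subset[OF ms(2)] by (rule finite_subset[rotated])
qed

lemma unfolding_rule_ans_disjoint:
  assumes "is_unfolding xs atoms M \<Pi>" "inj_on sign M" "set xs = (\<Union>a\<in>set atoms. set (snd a))"
    and "r1 \<in> \<Pi>" "r2 \<in> \<Pi>" "r1 \<noteq> r2"
  shows "rule_ans E r1 \<inter> rule_ans E r2 = {}"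
proof -
  obtain ms1 where ms1: "set ms1 \<subseteq> M" "unfolds_from xs atoms ms1 r1"
    using unfolding_rule_origin[OF assms(1,4)] .
  obtain ms2 where ms2: "set ms2 \<subseteq> M" "unfolds_from xs atoms ms2 r2"
    using unfolding_rule_origin[OF assms(1,5)] .
  have "ms1 \<noteq> ms2" using unfolding_rule_unique[OF assms(1,4,5)] ms1(2) ms2(2) assms(6) by blast
  then have "map sign ms1 \<noteq> map sign ms2"
    using inj_on_map_eq_map[OF inj_on_subset[OF assms(2)]] ms1(1) ms2(1) by blast
  then have "tuple_ans xs atoms ms1 (\<lambda>i. E (m_view (ms1 ! i))) \<inter> tuple_ans xs atoms ms2 (\<lambda>i. E (m_view (ms2 ! i))) = {}"
    by (rule tuple_ans_disjoint[OF assms(3)])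
  then show ?thesis
    using rule_ans_unfolds_from_subset[OF ms1(2)] rule_ans_unfolds_from_subset[OF ms2(2)] by blast
qed

section \<open>Wrapping\<close>

lemma map_fst_canon [simp]: "map fst (canon ar k fs) = fs"
  by (induction fs arbitrary: k) auto

lemma length_canon [simp]: "length (canon ar k fs) = length fs"
  by (induction fs arbitrary: k) auto

lemma concat_canon: "concat (map snd (canon ar k fs)) = [k..<k + sum_list (map ar fs)]"
proof (induction fs arbitrary: k)
  case (Cons f fs)
  then show ?case using upt_add_eq_append[of k "k + ar f" "sum_list (map ar fs)"]
    by (simp add: add.assoc)
qed simp

lemma canon_bounds:
  "(f, js) \<in> set (canon ar k fs) \<Longrightarrow> j \<in> set js \<Longrightarrow> k \<le> j \<and> j < k + sum_list (map ar fs)"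
  by (induction fs arbitrary: k) fastforce+

lemma sum_list_ar_eq_length_concat:
  "\<forall>(f, ys)\<in>set hs. length ys = ar f \<Longrightarrow> sum_list (map ar (map fst hs)) = length (concat (map snd hs))"
  by (induction hs) auto

lemma canon_rename_to_head:
  assumes "\<forall>(f, ys)\<in>set hs. length ys = ar f"
  shows "map (\<lambda>(f, js). (f, map (\<lambda>j. concat (map snd hs) ! (j - k)) js)) (canon ar k (map fst hs)) = hs"
  using assms
proof (induction hs arbitrary: k)
  case (Cons h hs)
  obtain f ys where h: "h = (f, ys)" and ys: "length ys = ar f"
    using Cons.prems by fastforce
  let ?vs = "ys @ concat (map snd hs)"
  have "map (\<lambda>j. ?vs ! (j - k)) [k..<k + ar f] = ys"
    using ys by (auto intro!: nth_equalityI simp: nth_append)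
  moreover have "map (\<lambda>(g, js). (g, map (\<lambda>j. ?vs ! (j - k)) js)) (canon ar (k + ar f) (map fst hs))
      = map (\<lambda>(g, js). (g, map (\<lambda>j. concat (map snd hs) ! (j - (k + ar f))) js))
          (canon ar (k + ar f) (map fst hs))"
  proof (rule map_cong[OF refl])
    fix p assume p: "p \<in> set (canon ar (k + ar f) (map fst hs))"
    obtain g js where gjs: "p = (g, js)" by (cases p)
    have "?vs ! (j - k) = concat (map snd hs) ! (j - (k + ar f))" if j: "j \<in> set js" for j
    proof -
      have "k + ar f \<le> j" using canon_bounds[of g js ar "k + ar f" "map fst hs" j] p j unfolding gjs by simp
      then have "\<not> j - k < length ys" "j - k - length ys = j - (k + ar f)" using ys by auto
      then show ?thesis by (simp only: nth_append if_False)
    qed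
    then show "(case p of (g, js) \<Rightarrow> (g, map (\<lambda>j. ?vs ! (j - k)) js))
        = (case p of (g, js) \<Rightarrow> (g, map (\<lambda>j. concat (map snd hs) ! (j - (k + ar f))) js))"
      unfolding gjs by simp
  qed
  ultimately show ?case
    using Cons.IH Cons.prems h by simp
qed simp

lemma wrap_mapping_simps:
  "m_pred (wrap_mapping ar s) = fst s" "m_head (wrap_mapping ar s) = canon ar 0 (snd s)"
  "m_view (wrap_mapping ar s) = s" "m_vars (wrap_mapping ar s) = concat (map snd (canon ar 0 (snd s)))"
  by (simp_all add: wrap_mapping_def)

lemma sign_wrap_mapping [simp]: "sign (wrap_mapping ar s) = s"
  by (simp add: sign_def wrap_mapping_simps)

lemma inj_on_sign_wrap: "inj_on sign (wrap ar M)"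
  by (rule inj_onI) (auto simp: wrap_def)

lemma wrap_mapping_m_view: "m \<in> wrap ar M \<Longrightarrow> m = wrap_mapping ar (m_view m)"
  by (auto simp: wrap_def wrap_mapping_simps)

lemma set_snd_subset_concat: "(f, ys) \<in> set hs \<Longrightarrow> set ys \<subseteq> set (concat (map snd hs))"
  by (induction hs) auto

lemma safe_wrap_mapping: "safe_mapping (wrap_mapping ar s)"
  unfolding safe_mapping_def wrap_mapping_simps using set_snd_subset_concat by fast

lemma finite_wrap_ext: "finite M \<Longrightarrow> \<forall>V. finite (ext V) \<Longrightarrow> finite (wrap_ext ext M s)"
  unfolding wrap_ext_def by simp

definition normal_mapping :: "('f \<Rightarrow> nat) \<Rightarrow> ('l, 'f, 'vn) mapping \<Rightarrow> bool" where
  "normal_mapping ar m \<longleftrightarrow> m_vars m = concat (map snd (m_head m)) \<and> distinct (m_vars m) \<and>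
     (\<forall>(f, ys)\<in>set (m_head m). length ys = ar f)"

lemma normal_mappings_iff: "normal_mappings ar M \<longleftrightarrow> (\<forall>m\<in>M. normal_mapping ar m)"
  unfolding normal_mappings_def normal_mapping_def ..

lemma normal_mapping_safe: "normal_mapping ar m \<Longrightarrow> safe_mapping m"
  unfolding normal_mapping_def safe_mapping_def using set_snd_subset_concat by fastforce

lemma m_vars_wrap_mapping_sign:
  assumes "normal_mapping ar m"
  shows "m_vars (wrap_mapping ar (sign m)) = [0..<length (m_vars m)]"
proof -
  have "sum_list (map ar (map fst (m_head m))) = length (m_vars m)"
    using assms sum_list_ar_eq_length_concat unfolding normal_mapping_def by metis
  then show ?thesis by (simp only: wrap_mapping_simps sign_def snd_conv concat_canon add_0)
qed

lemma head_term_wrap_mapping_sign: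
  assumes "normal_mapping ar m" "k < length (m_head m)"
    and "\<forall>j<length (m_vars m). R (Inr (i, j)) = Inr (i, m_vars m ! j)"
  shows "subst (\<lambda>x. Var (R x)) (head_term i (m_head (wrap_mapping ar (sign m)) ! k))
         = head_term i (m_head m ! k)"
proof -
  define hs where "hs = m_head m"
  have vars: "m_vars m = concat (map snd hs)" and ar: "\<forall>(f, ys)\<in>set hs. length ys = ar f"
    using assms(1) unfolding normal_mapping_def hs_def by auto
  obtain f js where fjs: "canon ar 0 (map fst hs) ! k = (f, js)" by fastforce
  have k: "k < length (canon ar 0 (map fst hs))" using assms(2) by (simp add: hs_def)
  have "hs ! k = (f, map (\<lambda>j. m_vars m ! j) js)"
    using arg_cong[OF canon_rename_to_head[OF ar, of 0], of "\<lambda>l. l ! k"] k fjs vars by simp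
  moreover have "\<forall>j\<in>set js. j < length (m_vars m)"
    using canon_bounds[OF nth_mem[OF k, unfolded fjs]] sum_list_ar_eq_length_concat[OF ar] vars by auto
  ultimately show ?thesis
    using fjs assms(3) by (simp add: hs_def wrap_mapping_simps sign_def head_term_def)
qed

lemma distinct_extend_bij: "distinct (vs :: nat list) \<Longrightarrow> \<exists>p. bij p \<and> (\<forall>j<length vs. p j = vs ! j)"
  using inj_on_extend_bij[of "{..<length vs}" "nth vs"] inj_on_nth[of vs "{..<length vs}"] by auto

lemma bij_rename_Inr:
  assumes "\<And>i. bij (P i)"
  shows "bij (\<lambda>v. case v of Inl x \<Rightarrow> Inl x | Inr (i, j) \<Rightarrow> Inr (i, P i j))"
proof (rule o_bij)
  show "(\<lambda>v. case v of Inl x \<Rightarrow> Inl x | Inr (i, j) \<Rightarrow> Inr (i, inv (P i) j))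
      \<circ> (\<lambda>v. case v of Inl x \<Rightarrow> Inl x | Inr (i, j) \<Rightarrow> Inr (i, P i j)) = id"
    using assms by (auto simp: fun_eq_iff bij_is_inj split: sum.splits)
  show "(\<lambda>v. case v of Inl x \<Rightarrow> Inl x | Inr (i, j) \<Rightarrow> Inr (i, P i j))
      \<circ> (\<lambda>v. case v of Inl x \<Rightarrow> Inl x | Inr (i, j) \<Rightarrow> Inr (i, inv (P i) j)) = id"
    using assms by (auto simp: fun_eq_iff bij_is_surj surj_f_inv_f split: sum.splits)
qed

text \<open>The view variables of the wrapped copy of the \<open>i\<close>-th mapping are \<open>0, \<dots>, n - 1\<close>;
  \<open>R\<close> sends the \<open>j\<close>-th of them to the \<open>j\<close>-th view variable of the original.\<close>

definition wrap_renaming ::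
  "('l, 'f, 'vn) mapping list \<Rightarrow> ('v + nat \<times> nat \<Rightarrow> 'v + nat \<times> nat) \<Rightarrow> bool" where
  "wrap_renaming ms R \<longleftrightarrow> (\<forall>x. R (Inl x) = Inl x) \<and>
     (\<forall>i<length ms. \<forall>j<length (m_vars (ms ! i)). R (Inr (i, j)) = Inr (i, m_vars (ms ! i) ! j))"

lemma ex_bij_wrap_renaming:
  assumes "\<forall>m\<in>set ms. normal_mapping ar m"
  shows "\<exists>R. bij R \<and> wrap_renaming ms R"
proof -
  have "\<exists>p. bij p \<and> (i < length ms \<longrightarrow> (\<forall>j<length (m_vars (ms ! i)). p j = m_vars (ms ! i) ! j))" for i
  proof (cases "i < length ms")
    case True
    then have "ms ! i \<in> set ms" by simp
    then have "distinct (m_vars (ms ! i))" using assms unfolding normal_mapping_def by blast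
    from distinct_extend_bij[OF this] obtain p
      where "bij p" "\<forall>j<length (m_vars (ms ! i)). p j = m_vars (ms ! i) ! j" by blast
    then show ?thesis by blast
  next
    case False
    show ?thesis by (intro exI[of _ id] conjI bij_id) (simp add: False)
  qed
  then obtain P where P: "\<And>i. bij (P i)"
    "\<And>i j. i < length ms \<Longrightarrow> j < length (m_vars (ms ! i)) \<Longrightarrow> P i j = m_vars (ms ! i) ! j"
    by metis
  have "bij (\<lambda>v. case v of Inl x \<Rightarrow> Inl x | Inr (i, j) \<Rightarrow> Inr (i, P i j))"
    using P(1) by (rule bij_rename_Inr)
  moreover have "wrap_renaming ms (\<lambda>v. case v of Inl x \<Rightarrow> Inl x | Inr (i, j) \<Rightarrow> Inr (i, P i j))"
    unfolding wrap_renaming_def using P(2) by simp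
  ultimately show ?thesis by blast
qed

lemma unifier_wrap_renaming:
  assumes "\<forall>m\<in>set ms. normal_mapping ar m" "wrap_renaming ms R"
  shows "unifier atoms ms \<tau> \<longleftrightarrow> unifier atoms (map (\<lambda>m. wrap_mapping ar (sign m)) ms) (\<lambda>x. \<tau> (R x))"
proof -
  let ?wms = "map (\<lambda>m. wrap_mapping ar (sign m)) ms"
  have heads: "subst (\<lambda>x. \<tau> (R x)) (head_term i (m_head (?wms ! i) ! k))
      = subst \<tau> (head_term i (m_head (ms ! i) ! k))"
    if i: "i < length ms" and k: "k < length (m_head (ms ! i))" for i k
  proof -
    have R: "\<forall>j<length (m_vars (ms ! i)). R (Inr (i, j)) = Inr (i, m_vars (ms ! i) ! j)"
      using assms(2) i unfolding wrap_renaming_def by blast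
    have "subst (\<lambda>x. \<tau> (R x)) (head_term i (m_head (?wms ! i) ! k))
        = subst \<tau> (subst (\<lambda>x. Var (R x)) (head_term i (m_head (wrap_mapping ar (sign (ms ! i))) ! k)))"
      using i by (simp add: subst_subst)
    also have "\<dots> = subst \<tau> (head_term i (m_head (ms ! i) ! k))"
      using assms(1) i by (simp add: head_term_wrap_mapping_sign[OF _ k R])
    finally show ?thesis .
  qed
  have "m_pred (?wms ! i) = m_pred (ms ! i)" "length (m_head (?wms ! i)) = length (m_head (ms ! i))"
    if "i < length ms" for i
    using that by (simp_all add: wrap_mapping_simps sign_def)
  moreover have "R (Inl x) = Inl x" for x
    using assms(2) unfolding wrap_renaming_def by blast
  ultimately show ?thesis
    unfolding unifier_def using heads by auto
qed

lemma view_args_wrap_renaming: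
  assumes "\<forall>m\<in>set ms. normal_mapping ar m" "wrap_renaming ms R" "i < length ms"
  shows "map (\<lambda>z. \<tau> (R (Inr (i, z)))) (m_vars (wrap_mapping ar (sign (ms ! i))))
    = map (\<lambda>z. \<tau> (Inr (i, z))) (m_vars (ms ! i))"
proof -
  have R: "\<forall>j<length (m_vars (ms ! i)). R (Inr (i, j)) = Inr (i, m_vars (ms ! i) ! j)"
    using assms(2,3) unfolding wrap_renaming_def by blast
  have "map (\<lambda>z. \<tau> (R (Inr (i, z)))) (m_vars (wrap_mapping ar (sign (ms ! i))))
      = map (\<lambda>j. \<tau> (R (Inr (i, j)))) [0..<length (m_vars (ms ! i))]"
    using assms(1,3) by (simp add: m_vars_wrap_mapping_sign)
  also have "\<dots> = map (\<lambda>z. \<tau> (Inr (i, z))) (map (\<lambda>j. m_vars (ms ! i) ! j) [0..<length (m_vars (ms ! i))])"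
    using R by simp
  also have "\<dots> = map (\<lambda>z. \<tau> (Inr (i, z))) (m_vars (ms ! i))"
    by (simp only: map_nth)
  finally show ?thesis .
qed

lemma mgu_rename:
  fixes \<sigma> :: "'v + nat \<times> nat \<Rightarrow> ('f, 'c, 'v) utm"
  assumes "bij R"
    and unif: "\<And>\<tau> :: 'v + nat \<times> nat \<Rightarrow> ('f, 'c, 'v) utm.
      unifier atoms ms \<tau> \<longleftrightarrow> unifier atoms ws (\<lambda>x. \<tau> (R x))"
  shows "mgu atoms ms \<sigma> \<longleftrightarrow> mgu atoms ws (\<lambda>x. \<sigma> (R x))"
proof
  assume mgu: "mgu atoms ms \<sigma>"
  show "mgu atoms ws (\<lambda>x. \<sigma> (R x))"
    unfolding mgu_def
  proof (intro conjI allI impI)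
    show "unifier atoms ws (\<lambda>x. \<sigma> (R x))" using mgu unif unfolding mgu_def by blast
  next
    fix \<tau> :: "'v + nat \<times> nat \<Rightarrow> ('f, 'c, 'v) utm" assume "unifier atoms ws \<tau>"
    moreover have "(\<lambda>x. \<tau> (inv R (R x))) = \<tau>" using assms(1) by (simp add: bij_is_inj)
    ultimately have "unifier atoms ms (\<lambda>y. \<tau> (inv R y))" using unif[of "\<lambda>y. \<tau> (inv R y)"] by simp
    then obtain \<theta> where "\<forall>y. \<tau> (inv R y) = subst \<theta> (\<sigma> y)" using mgu unfolding mgu_def by blast
    then have "\<forall>x. \<tau> x = subst \<theta> (\<sigma> (R x))" using assms(1) by (metis bij_inv_eq_iff)
    then show "\<exists>\<theta>. \<forall>x. \<tau> x = subst \<theta> (\<sigma> (R x))" by blast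
  qed
next
  assume mgu: "mgu atoms ws (\<lambda>x. \<sigma> (R x))"
  show "mgu atoms ms \<sigma>"
    unfolding mgu_def
  proof (intro conjI allI impI)
    show "unifier atoms ms \<sigma>" using mgu unif unfolding mgu_def by blast
  next
    fix \<tau> :: "'v + nat \<times> nat \<Rightarrow> ('f, 'c, 'v) utm" assume "unifier atoms ms \<tau>"
    then have "unifier atoms ws (\<lambda>x. \<tau> (R x))" using unif by blast
    then obtain \<theta> where "\<forall>x. \<tau> (R x) = subst \<theta> (\<sigma> (R x))" using mgu unfolding mgu_def by blast
    then have "\<forall>y. \<tau> y = subst \<theta> (\<sigma> y)" using assms(1) by (metis bij_inv_eq_iff)
    then show "\<exists>\<theta>. \<forall>y. \<tau> y = subst \<theta> (\<sigma> y)" by blast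
  qed
qed

lemma safe_mapping_wrap: "m \<in> wrap ar M \<Longrightarrow> safe_mapping m"
  using safe_wrap_mapping wrap_mapping_m_view by metis

lemma tuple_ans_wrap:
  fixes ms :: "('l, 'f, 'vn) mapping list" and X :: "nat \<Rightarrow> 'c list set" and xs :: "'v list"
  assumes "\<forall>m\<in>set ms. normal_mapping ar m"
  shows "tuple_ans xs atoms (map (\<lambda>m. wrap_mapping ar (sign m)) ms) X = tuple_ans xs atoms ms X"
proof -
  obtain R :: "'v + nat \<times> nat \<Rightarrow> 'v + nat \<times> nat" where R: "bij R" "wrap_renaming ms R"
    using ex_bij_wrap_renaming[OF assms] by blast
  have R_Inl: "R (Inl x) = Inl x" for x
    using R(2) unfolding wrap_renaming_def by blast
  let ?wms = "map (\<lambda>m. wrap_mapping ar (sign m)) ms"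
  show ?thesis
  proof (intro equalityI subsetI)
    fix a assume "a \<in> tuple_ans xs atoms ?wms X"
    then obtain \<tau> where a: "a = map (\<lambda>x. \<tau> (Inl x)) xs" and u: "unifier atoms ?wms \<tau>"
      and body: "\<forall>i<length ?wms. map (\<lambda>z. \<tau> (Inr (i, z))) (m_vars (?wms ! i)) \<in> map Cst ` X i"
      by (rule tuple_ans_memE)
    define \<tau>0 where "\<tau>0 = (\<lambda>y. \<tau> (inv R y))"
    have \<tau>: "\<tau> = (\<lambda>x. \<tau>0 (R x))" unfolding \<tau>0_def using R(1) by (simp add: bij_is_inj)
    have "map (\<lambda>x. \<tau>0 (Inl x)) xs \<in> tuple_ans xs atoms ms X"
    proof (rule tuple_ans_memI)
      show "unifier atoms ms \<tau>0"
        using u unfolding \<tau> unifier_wrap_renaming[OF assms R(2)] .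
      fix i assume i: "i < length ms"
      show "map (\<lambda>z. \<tau>0 (Inr (i, z))) (m_vars (ms ! i)) \<in> map Cst ` X i"
        using body i unfolding \<tau> view_args_wrap_renaming[OF assms R(2) i, symmetric] by simp
    qed
    then show "a \<in> tuple_ans xs atoms ms X" unfolding a \<tau> R_Inl .
  next
    fix a assume "a \<in> tuple_ans xs atoms ms X"
    then obtain \<tau> where a: "a = map (\<lambda>x. \<tau> (Inl x)) xs" and u: "unifier atoms ms \<tau>"
      and body: "\<forall>i<length ms. map (\<lambda>z. \<tau> (Inr (i, z))) (m_vars (ms ! i)) \<in> map Cst ` X i"
      by (rule tuple_ans_memE)
    have "map (\<lambda>x. \<tau> (R (Inl x))) xs \<in> tuple_ans xs atoms ?wms X"
    proof (rule tuple_ans_memI)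
      show "unifier atoms ?wms (\<lambda>x. \<tau> (R x))"
        using u unfolding unifier_wrap_renaming[OF assms R(2)] .
      fix i assume "i < length ?wms"
      then have i: "i < length ms" by simp
      show "map (\<lambda>z. \<tau> (R (Inr (i, z)))) (m_vars (?wms ! i)) \<in> map Cst ` X i"
        using body i view_args_wrap_renaming[OF assms R(2) i, of \<tau>] by simp
    qed
    then show "a \<in> tuple_ans xs atoms ?wms X" unfolding a R_Inl .
  qed
qed

lemma ex_mgu_wrap_iff:
  fixes ms :: "('l, 'f, 'vn) mapping list"
  assumes "\<forall>m\<in>set ms. normal_mapping ar m"
  shows "(\<exists>\<sigma> :: 'v + nat \<times> nat \<Rightarrow> ('f, 'c, 'v) utm. mgu atoms (map (\<lambda>m. wrap_mapping ar (sign m)) ms) \<sigma>)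
    \<longleftrightarrow> (\<exists>\<sigma> :: 'v + nat \<times> nat \<Rightarrow> ('f, 'c, 'v) utm. mgu atoms ms \<sigma>)"
proof -
  obtain R :: "'v + nat \<times> nat \<Rightarrow> 'v + nat \<times> nat" where R: "bij R" "wrap_renaming ms R"
    using ex_bij_wrap_renaming[OF assms] by blast
  let ?wms = "map (\<lambda>m. wrap_mapping ar (sign m)) ms"
  have mgu_R: "mgu atoms ms \<sigma> \<longleftrightarrow> mgu atoms ?wms (\<lambda>x. \<sigma> (R x))"
    for \<sigma> :: "'v + nat \<times> nat \<Rightarrow> ('f, 'c, 'v) utm"
    by (rule mgu_rename[OF R(1)]) (rule unifier_wrap_renaming[OF assms R(2)])
  show ?thesis
  proof
    assume "\<exists>\<sigma> :: 'v + nat \<times> nat \<Rightarrow> ('f, 'c, 'v) utm. mgu atoms ?wms \<sigma>"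
    then obtain \<sigma> :: "'v + nat \<times> nat \<Rightarrow> ('f, 'c, 'v) utm" where "mgu atoms ?wms \<sigma>" ..
    moreover have "(\<lambda>x. \<sigma> (inv R (R x))) = \<sigma>" using R(1) by (simp add: bij_is_inj)
    ultimately have "mgu atoms ms (\<lambda>y. \<sigma> (inv R y))" using mgu_R[of "\<lambda>y. \<sigma> (inv R y)"] by simp
    then show "\<exists>\<sigma> :: 'v + nat \<times> nat \<Rightarrow> ('f, 'c, 'v) utm. mgu atoms ms \<sigma>"
      by (rule exI[of _ "\<lambda>y. \<sigma> (inv R y)"])
  next
    assume "\<exists>\<sigma> :: 'v + nat \<times> nat \<Rightarrow> ('f, 'c, 'v) utm. mgu atoms ms \<sigma>"
    then show "\<exists>\<sigma> :: 'v + nat \<times> nat \<Rightarrow> ('f, 'c, 'v) utm. mgu atoms ?wms \<sigma>"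
      using mgu_R by blast
  qed
qed

lemma tuple_ans_UN_choice:
  assumes "a \<in> tuple_ans xs atoms ws (\<lambda>i. \<Union>m\<in>S i. Y m)"
  obtains ms where "length ms = length ws" "\<forall>i<length ws. ms ! i \<in> S i"
    "a \<in> tuple_ans xs atoms ws (\<lambda>i. Y (ms ! i))"
proof -
  obtain \<tau> where a: "a = map (\<lambda>x. \<tau> (Inl x)) xs" and u: "unifier atoms ws \<tau>"
    and body: "\<forall>i<length ws. map (\<lambda>z. \<tau> (Inr (i, z))) (m_vars (ws ! i)) \<in> map Cst ` (\<Union>m\<in>S i. Y m)"
    using assms by (rule tuple_ans_memE)
  then have "\<forall>i<length ws. \<exists>m. m \<in> S i \<and> map (\<lambda>z. \<tau> (Inr (i, z))) (m_vars (ws ! i)) \<in> map Cst ` Y m"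
    by blast
  then obtain ms where ms: "length ms = length ws"
    "\<forall>i<length ws. ms ! i \<in> S i \<and> map (\<lambda>z. \<tau> (Inr (i, z))) (m_vars (ws ! i)) \<in> map Cst ` Y (ms ! i)"
    unfolding Skolem_list_nth by blast
  moreover have "a \<in> tuple_ans xs atoms ws (\<lambda>i. Y (ms ! i))"
    unfolding a using u ms(2) by (intro tuple_ans_memI) simp_all
  ultimately show thesis using that by blast
qed

lemma wrap_tuple_ans_choice:
  assumes "set wms \<subseteq> wrap ar M" "a \<in> tuple_ans xs atoms wms (\<lambda>i. wrap_ext ext M (m_view (wms ! i)))"
  obtains ms where "set ms \<subseteq> M" "wms = map (\<lambda>m. wrap_mapping ar (sign m)) ms"
    "a \<in> tuple_ans xs atoms wms (\<lambda>i. ext (m_view (ms ! i)))"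
proof -
  have "a \<in> tuple_ans xs atoms wms (\<lambda>i. \<Union>m\<in>{m \<in> M. sign m = m_view (wms ! i)}. ext (m_view m))"
    using assms(2) unfolding wrap_ext_def .
  then obtain ms where len: "length ms = length wms"
    and ms: "\<forall>i<length wms. ms ! i \<in> {m \<in> M. sign m = m_view (wms ! i)}"
    and a: "a \<in> tuple_ans xs atoms wms (\<lambda>i. ext (m_view (ms ! i)))"
    by (rule tuple_ans_UN_choice)
  have "wms = map (\<lambda>m. wrap_mapping ar (sign m)) ms"
  proof (rule nth_equalityI)
    show "length wms = length (map (\<lambda>m. wrap_mapping ar (sign m)) ms)" using len by simp
  next
    fix i assume i: "i < length wms"
    then have "wms ! i \<in> wrap ar M" using assms(1) by auto
    then have "wms ! i = wrap_mapping ar (m_view (wms ! i))" by (rule wrap_mapping_m_view)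
    then show "wms ! i = map (\<lambda>m. wrap_mapping ar (sign m)) ms ! i" using ms i len by simp
  qed
  moreover have "set ms \<subseteq> M" using ms len by (auto simp: in_set_conv_nth)
  ultimately show thesis using that a by blast
qed

lemma rule_ans_unf_rules_subset_wrap:
  fixes M :: "('l, 'f, 'vn) mapping set" and ext :: "'vn \<Rightarrow> 'c list set" and xs :: "'v list"
  assumes "normal_mappings ar M" "set xs \<subseteq> (\<Union>a\<in>set atoms. set (snd a))"
    and "r \<in> unf_rules xs atoms M"
  shows "rule_ans ext r \<subseteq> (\<Union>r\<in>unf_rules xs atoms (wrap ar M). rule_ans (wrap_ext ext M) r)"
proof -
  obtain ms \<sigma> where r: "r = unf_rule xs ms \<sigma>" and ms: "set ms \<subseteq> M" and \<sigma>: "mgu atoms ms \<sigma>"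
    using assms(3) unfolding unf_rules_def by blast
  let ?wms = "map (\<lambda>m. wrap_mapping ar (sign m)) ms"
  have normal: "\<forall>m\<in>set ms. normal_mapping ar m"
    using assms(1) ms unfolding normal_mappings_iff by blast
  then have safe: "\<forall>m\<in>set ms. safe_mapping m" using normal_mapping_safe by blast
  obtain \<sigma>w :: "'v + nat \<times> nat \<Rightarrow> ('f, 'c, 'v) utm" where \<sigma>w: "mgu atoms ?wms \<sigma>w"
    using ex_mgu_wrap_iff[OF normal] \<sigma> by blast
  have "rule_ans ext r = tuple_ans xs atoms ms (\<lambda>i. ext (m_view (ms ! i)))"
    unfolding r by (rule rule_ans_unf_rule_mgu[OF \<sigma> safe assms(2)])
  also have "\<dots> = tuple_ans xs atoms ?wms (\<lambda>i. ext (m_view (ms ! i)))"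
    by (rule tuple_ans_wrap[OF normal, symmetric])
  also have "\<dots> \<subseteq> tuple_ans xs atoms ?wms (\<lambda>i. wrap_ext ext M (m_view (?wms ! i)))"
  proof (rule tuple_ans_mono)
    fix i assume i: "i < length ?wms"
    then have "ms ! i \<in> M" using ms by auto
    then show "ext (m_view (ms ! i)) \<subseteq> wrap_ext ext M (m_view (?wms ! i))"
      using i unfolding wrap_ext_def by (auto simp: wrap_mapping_simps)
  qed
  also have "\<dots> = rule_ans (wrap_ext ext M) (unf_rule xs ?wms \<sigma>w)"
    by (intro rule_ans_unf_rule_mgu[OF \<sigma>w _ assms(2), symmetric]) (simp add: safe_wrap_mapping)
  also have "\<dots> \<subseteq> (\<Union>r\<in>unf_rules xs atoms (wrap ar M). rule_ans (wrap_ext ext M) r)"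
  proof -
    have "set ?wms \<subseteq> wrap ar M" using ms unfolding wrap_def by auto
    then have "unf_rule xs ?wms \<sigma>w \<in> unf_rules xs atoms (wrap ar M)"
      using \<sigma>w unfolding unf_rules_def by blast
    then show ?thesis by blast
  qed
  finally show ?thesis .
qed

lemma rule_ans_wrap_subset_unf_rules:
  fixes M :: "('l, 'f, 'vn) mapping set" and ext :: "'vn \<Rightarrow> 'c list set" and xs :: "'v list"
  assumes "normal_mappings ar M" "set xs \<subseteq> (\<Union>a\<in>set atoms. set (snd a))"
    and "r \<in> unf_rules xs atoms (wrap ar M)"
  shows "rule_ans (wrap_ext ext M) r \<subseteq> (\<Union>r\<in>unf_rules xs atoms M. rule_ans ext r)"
proof
  fix a assume a: "a \<in> rule_ans (wrap_ext ext M) r"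
  obtain wms \<sigma>w where r: "r = unf_rule xs wms \<sigma>w" and wms: "set wms \<subseteq> wrap ar M"
    and \<sigma>w: "mgu atoms wms \<sigma>w"
    using assms(3) unfolding unf_rules_def by blast
  have "\<forall>m\<in>set wms. safe_mapping m"
    using wms safe_mapping_wrap by blast
  then have "rule_ans (wrap_ext ext M) r = tuple_ans xs atoms wms (\<lambda>i. wrap_ext ext M (m_view (wms ! i)))"
    unfolding r by (rule rule_ans_unf_rule_mgu[OF \<sigma>w _ assms(2)])
  then have "a \<in> tuple_ans xs atoms wms (\<lambda>i. wrap_ext ext M (m_view (wms ! i)))"
    using a by simp
  then obtain ms where ms: "set ms \<subseteq> M" and wms_eq: "wms = map (\<lambda>m. wrap_mapping ar (sign m)) ms"
    and a': "a \<in> tuple_ans xs atoms wms (\<lambda>i. ext (m_view (ms ! i)))"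
    by (rule wrap_tuple_ans_choice[OF wms])
  have normal: "\<forall>m\<in>set ms. normal_mapping ar m"
    using assms(1) ms unfolding normal_mappings_iff by blast
  then have safe: "\<forall>m\<in>set ms. safe_mapping m" using normal_mapping_safe by blast
  obtain \<sigma> :: "'v + nat \<times> nat \<Rightarrow> ('f, 'c, 'v) utm" where \<sigma>: "mgu atoms ms \<sigma>"
    using ex_mgu_wrap_iff[OF normal] \<sigma>w wms_eq by blast
  have "a \<in> rule_ans ext (unf_rule xs ms \<sigma>)"
    using a' unfolding wms_eq tuple_ans_wrap[OF normal] rule_ans_unf_rule_mgu[OF \<sigma> safe assms(2)] .
  moreover have "unf_rule xs ms \<sigma> \<in> unf_rules xs atoms M"
    using ms \<sigma> unfolding unf_rules_def by blast
  ultimately show "a \<in> (\<Union>r\<in>unf_rules xs atoms M. rule_ans ext r)" by blast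
qed

lemma unf_ans_wrap:
  fixes M :: "('l, 'f, 'vn) mapping set" and ext :: "'vn \<Rightarrow> 'c list set" and xs :: "'v list"
    and \<Pi> :: "('f, 'c, 'v, 'vn) rule set" and \<Pi>w :: "('f, 'c, 'v, 'l \<times> 'f list) rule set"
  assumes "normal_mappings ar M" "set xs \<subseteq> (\<Union>a\<in>set atoms. set (snd a))"
    and "is_unfolding xs atoms M \<Pi>" "is_unfolding xs atoms (wrap ar M) \<Pi>w"
  shows "unf_ans (wrap_ext ext M) \<Pi>w = unf_ans ext \<Pi>"
  unfolding unf_ans_unfolding[OF assms(3)] unf_ans_unfolding[OF assms(4)]
proof (intro equalityI UN_least)
  fix r :: "('f, 'c, 'v, 'l \<times> 'f list) rule" assume "r \<in> unf_rules xs atoms (wrap ar M)"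
  then show "rule_ans (wrap_ext ext M) r \<subseteq> (\<Union>r\<in>unf_rules xs atoms M. rule_ans ext r)"
    by (rule rule_ans_wrap_subset_unf_rules[OF assms(1,2)])
next
  fix r :: "('f, 'c, 'v, 'vn) rule" assume "r \<in> unf_rules xs atoms M"
  then show "rule_ans ext r \<subseteq> (\<Union>r\<in>unf_rules xs atoms (wrap ar M). rule_ans (wrap_ext ext M) r)"
    by (rule rule_ans_unf_rules_subset_wrap[OF assms(1,2)])
qed

theorem theorem5:
  fixes M :: "('l, 'f, 'vn) mapping set"
    and ext :: "'vn \<Rightarrow> 'c list set"
    and ar :: "'f \<Rightarrow> nat"
    and xs :: "'v list"
    and atoms :: "('l \<times> 'v list) list"
    and \<Pi> :: "('f, 'c, 'v, 'vn) rule set"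
    and \<Pi>w :: "('f, 'c, 'v, 'l \<times> 'f list) rule set"
  assumes "finite M"
    and "\<forall>V. finite (ext V)"
    and "normal_mappings ar M"
    and "set xs = (\<Union>a\<in>set atoms. set (snd a))"
    and "is_unfolding xs atoms M \<Pi>"
    and "is_unfolding xs atoms (wrap ar M) \<Pi>w"
  shows "card (unf_ans ext \<Pi>) = (\<Sum>r\<in>\<Pi>w. card (rule_ans (wrap_ext ext M) r))"
proof -
  have xs: "set xs \<subseteq> (\<Union>a\<in>set atoms. set (snd a))" using assms(4) by simp
  have "card (unf_ans ext \<Pi>) = card (\<Union>r\<in>\<Pi>w. rule_ans (wrap_ext ext M) r)"
    using unf_ans_wrap[OF assms(3) xs assms(5,6)] unfolding unf_ans_def by simp
  also have "\<dots> = (\<Sum>r\<in>\<Pi>w. card (rule_ans (wrap_ext ext M) r))"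
  proof (rule card_UN_disjoint)
    show "finite \<Pi>w"
      using assms(1) by (intro finite_unfolding[OF _ assms(6)]) (simp add: wrap_def)
    show "\<forall>r\<in>\<Pi>w. finite (rule_ans (wrap_ext ext M) r)"
      using finite_rule_ans_unfolding[OF assms(6) _ _ xs] finite_wrap_ext[OF assms(1,2)]
        safe_mapping_wrap by blast
    show "\<forall>r1\<in>\<Pi>w. \<forall>r2\<in>\<Pi>w. r1 \<noteq> r2 \<longrightarrow> rule_ans (wrap_ext ext M) r1 \<inter> rule_ans (wrap_ext ext M) r2 = {}"
      using unfolding_rule_ans_disjoint[OF assms(6) inj_on_sign_wrap assms(4)] by blast
  qed
  finally show ?thesis .
qed

end
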